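(* Let $P\subseteq\mathbb{R}^n$ be a polytope and $H\subseteq\mathbb{R}^n$ a hyperplane, and let $P_1,P_2$ be the two halves of $P$ with respect to $H$ (assumed nonempty). Then in $\mathcal{P}(\mathbb{R}^n)$ \[ \chi_{\mathcal{F}}(P)+\chi_{\mathcal{F}}(P\cap H)=\chi_{\mathcal{F}}(P_1)+\chi_{\mathcal{F}}(P_2). \] Moreover, if the identity $*Q=-\chi_{\mathcal{F}}(Q)$ holds for three of the four polytopes $P,P_1,P_2,P\cap H$, then it holds for the fourth.
   Context: $\mathcal{P}(\mathbb{R}^n)$ is the Grothendieck group of polytopes (convex hulls of nonempty finite sets) under Minkowski sum; $*Q=\{-q:q\in Q\}$. For $H=\{x:\phi(x)=c\}$ ($\phi$ linear nonzero), the halves of $P$ are $P_+=\{p\in P:\phi(p)\ge c\}$ and $P_-=\{p\in P:\phi(p)\le c\}$. A face of $Q$ is $\{q\in Q:\psi(q)=\max_Q\psi\}$ for linear $\psi$; $\mathcal{F}(Q)$ is the set of faces including $Q$; $\chi_{\mathcal{F}}(Q)=\sum_{F\in\mathcal{F}(Q)}(-1)^{\dim F}F$, with $\chi_{\mathcal{F}}(\emptyset)=0$. *)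

theory Defs
  imports "HOL-Analysis.Analysis"
begin

typedef (overloaded) 'a ppoly = "{P :: 'a::euclidean_space set. polytope P \<and> P \<noteq> {}}"
  morphisms pset Abs_ppoly
  by (rule exI[of _ "{0}"]) (simp add: polytope_sing)

lemma polytope_set_plus:
  assumes "polytope A" "polytope B" shows "polytope (A + B)"
proof -
  obtain u v where "finite u" "A = convex hull u" "finite v" "B = convex hull v"
    using assms by (auto simp: polytope_def)
  then show ?thesis
    by (auto simp: polytope_def convex_hull_set_plus intro!: exI[of _ "u + v"] finite_set_plus)
qed

lemma pset_plus_mem: "polytope (pset a + pset b) \<and> pset a + pset b \<noteq> {}"
  using pset[of a] pset[of b] polytope_set_plus by (auto simp: set_plus_def)

definition ppadd :: "'a::euclidean_space ppoly \<Rightarrow> 'a ppoly \<Rightarrow> 'a ppoly" where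
  "ppadd a b = Abs_ppoly (pset a + pset b)"

lemma pset_ppadd: "pset (ppadd a b) = pset a + pset b"
  unfolding ppadd_def using pset_plus_mem Abs_ppoly_inverse by blast

definition ppzero :: "'a::euclidean_space ppoly" where
  "ppzero = Abs_ppoly {0}"

lemma pset_ppzero: "pset ppzero = {0}"
  unfolding ppzero_def by (rule Abs_ppoly_inverse) (simp add: polytope_sing)

text \<open>Standard group completion: formal differences (a,b) with
  (a,b) ~ (c,d) iff a+d+e = b+c+e for some e.\<close>

definition grot_rel :: "('a::euclidean_space ppoly \<times> 'a ppoly) \<Rightarrow> ('a ppoly \<times> 'a ppoly) \<Rightarrow> bool" where
  "grot_rel x y \<longleftrightarrow> (\<exists>e. pset (fst x) + pset (snd y) + pset e = pset (snd x) + pset (fst y) + pset e)"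

lemma grot_rel_equivp: "equivp grot_rel"
proof (rule equivpI)
  show "reflp grot_rel"
    by (auto simp: reflp_def grot_rel_def add.commute)
  show "symp grot_rel"
    by (auto simp: symp_def grot_rel_def) (metis add.commute)
  show "transp grot_rel"
  proof (rule transpI)
    fix x y z
    assume "grot_rel x y" "grot_rel y z"
    then obtain e f where e: "pset (fst x) + pset (snd y) + pset e = pset (snd x) + pset (fst y) + pset e"
      and f: "pset (fst y) + pset (snd z) + pset f = pset (snd y) + pset (fst z) + pset f"
      by (auto simp: grot_rel_def)
    let ?g = "ppadd (ppadd (fst y) (snd y)) (ppadd e f)"
    have "pset (fst x) + pset (snd z) + pset ?g
        = (pset (fst x) + pset (snd y) + pset e) + (pset (fst y) + pset (snd z) + pset f)"
      by (simp add: pset_ppadd ac_simps)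
    also have "\<dots> = (pset (snd x) + pset (fst y) + pset e) + (pset (snd y) + pset (fst z) + pset f)"
      using e f by simp
    also have "\<dots> = pset (snd x) + pset (fst z) + pset ?g"
      by (simp add: pset_ppadd ac_simps)
    finally have "pset (fst x) + pset (snd z) + pset ?g = pset (snd x) + pset (fst z) + pset ?g" .
    then show "grot_rel x z" unfolding grot_rel_def by blast
  qed
qed

quotient_type (overloaded) 'a grot = "'a::euclidean_space ppoly \<times> 'a ppoly" / grot_rel
  by (rule grot_rel_equivp)

instantiation grot :: (euclidean_space) ab_group_add
begin

lift_definition zero_grot :: "'a grot" is "(ppzero, ppzero)" .

lift_definition plus_grot :: "'a grot \<Rightarrow> 'a grot \<Rightarrow> 'a grot"
  is "\<lambda>x y. (ppadd (fst x) (fst y), ppadd (snd x) (snd y))"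
proof -
  fix x x' y y' :: "'a ppoly \<times> 'a ppoly"
  assume "grot_rel x x'" "grot_rel y y'"
  then obtain e f where e: "pset (fst x) + pset (snd x') + pset e = pset (snd x) + pset (fst x') + pset e"
    and f: "pset (fst y) + pset (snd y') + pset f = pset (snd y) + pset (fst y') + pset f"
    by (auto simp: grot_rel_def)
  have "pset (fst x) + pset (fst y) + (pset (snd x') + pset (snd y')) + pset (ppadd e f)
      = (pset (fst x) + pset (snd x') + pset e) + (pset (fst y) + pset (snd y') + pset f)"
    by (simp add: pset_ppadd ac_simps)
  also have "\<dots> = (pset (snd x) + pset (fst x') + pset e) + (pset (snd y) + pset (fst y') + pset f)"
    using e f by simp
  also have "\<dots> = pset (snd x) + pset (snd y) + (pset (fst x') + pset (fst y')) + pset (ppadd e f)"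
    by (simp add: pset_ppadd ac_simps)
  finally show "grot_rel (ppadd (fst x) (fst y), ppadd (snd x) (snd y))
                         (ppadd (fst x') (fst y'), ppadd (snd x') (snd y'))"
    by (simp only: grot_rel_def fst_conv snd_conv pset_ppadd) (rule exI[of _ "ppadd e f"], simp only: pset_ppadd)
qed

lift_definition uminus_grot :: "'a grot \<Rightarrow> 'a grot" is "\<lambda>x. (snd x, fst x)"
  by (auto simp: grot_rel_def add.commute)

definition minus_grot :: "'a grot \<Rightarrow> 'a grot \<Rightarrow> 'a grot" where
  "minus_grot a b = a + - b"

instance
proof
  fix a b c :: "'a grot"
  show "a + b + c = a + (b + c)"
    by transfer (auto simp: grot_rel_def pset_ppadd ac_simps)
  show "a + b = b + a"
    by transfer (auto simp: grot_rel_def pset_ppadd ac_simps)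
  show "0 + a = a"
    by transfer (auto simp: grot_rel_def pset_ppadd pset_ppzero ac_simps)
  show "- a + a = 0"
    by transfer (auto simp: grot_rel_def pset_ppadd pset_ppzero ac_simps)
  show "a - b = a + - b"
    by (simp add: minus_grot_def)
qed

end

text \<open>The class [Q] of a nonempty polytope Q in the Grothendieck group
  (junk value 0 for sets that are not nonempty polytopes).\<close>

definition pclass :: "'a::euclidean_space set \<Rightarrow> 'a grot" where
  "pclass Q = (if polytope Q \<and> Q \<noteq> {} then abs_grot (Abs_ppoly Q, ppzero) else 0)"

text \<open>A face of Q: the set of maximisers in Q of a linear functional psi
  (psi = 0 gives Q itself).\<close>

definition faces :: "'a::euclidean_space set \<Rightarrow> 'a set set" where
  "faces Q = {{q \<in> Q. \<forall>q'\<in>Q. psi q' \<le> psi q} | psi :: 'a \<Rightarrow> real. linear psi}"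

definition chiF :: "'a::euclidean_space set \<Rightarrow> 'a grot" where
  "chiF Q = (if Q = {} then 0
             else (\<Sum>F\<in>faces Q. (if even (aff_dim F) then pclass F else - pclass F)))"

text \<open>The identity *Q = - chiF Q, where *Q = {-q. q in Q}.\<close>

definition star_identity :: "'a::euclidean_space set \<Rightarrow> bool" where
  "star_identity Q \<longleftrightarrow> pclass (uminus ` Q) = - chiF Q"

end

theory Submission
  imports Defs
begin

text \<open>Sort the nonempty faces of P by their position relative to the hyperplane H: those lying in
  one of the closed halves, and the crossing faces, which H cuts through. A nonempty face of a half
  P1 of P is either a face of P lying in P1, or F \<inter> P1 or F \<inter> H for a crossing face F; the faces
  of P \<inter> H are described likewise. All these sets are distinct, so the identity reduces to one
  relation per crossing face F. There F \<inter> P1 and F \<inter> P2 have the dimension of F and F \<inter> H has one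
  less, while the Minkowski identity (F \<inter> P1) + (F \<inter> P2) = F + (F \<inter> H) gives
  [F] + [F \<inter> H] = [F \<inter> P1] + [F \<inter> P2], which is exactly the required relation between the signed
  classes.

  The same Minkowski identity for the reflected polytope *P makes Q \<mapsto> [*Q] + \<chi>(Q) additive
  across the cut, and the identity *Q = -\<chi>(Q) says that this quantity vanishes.\<close>

section \<open>Hyperplane sections of convex sets\<close>

lemma open_segment_meets_hyperplane:
  fixes u v :: "'a::euclidean_space"
  assumes "a \<bullet> u < c" "c < a \<bullet> v"
  obtains w where "w \<in> open_segment u v" "a \<bullet> w = c"
proof
  define t where "t = (c - a \<bullet> u) / (a \<bullet> v - a \<bullet> u)"
  have "0 < t" "t < 1" "u \<noteq> v"
    using assms by (auto simp: t_def divide_simps)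
  then show "(1 - t) *\<^sub>R u + t *\<^sub>R v \<in> open_segment u v"
    by (auto simp: in_segment)
  have "a \<bullet> ((1 - t) *\<^sub>R u + t *\<^sub>R v) = a \<bullet> u + t * (a \<bullet> v - a \<bullet> u)"
    by (simp add: inner_add_right algebra_simps)
  also have "\<dots> = c"
    using assms by (simp add: t_def)
  finally show "a \<bullet> ((1 - t) *\<^sub>R u + t *\<^sub>R v) = c" .
qed

lemma convex_meets_hyperplane:
  fixes F :: "'a::euclidean_space set"
  assumes "convex F" "F \<inter> {x. c \<le> a \<bullet> x} \<noteq> {}" "F \<inter> {x. a \<bullet> x \<le> c} \<noteq> {}"
  shows "F \<inter> {x. a \<bullet> x = c} \<noteq> {}"
  using connected_ivt_hyperplane[OF convex_connected[OF assms(1)], of _ _ a c] assms(2,3) by blast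

lemma convex_halfspace_parts_plus:
  fixes F :: "'a::euclidean_space set"
  assumes "convex F"
  shows "(F \<inter> {x. c \<le> a \<bullet> x}) + (F \<inter> {x. a \<bullet> x \<le> c}) = F + (F \<inter> {x. a \<bullet> x = c})"
proof (intro equalityI subsetI)
  fix s assume "s \<in> (F \<inter> {x. c \<le> a \<bullet> x}) + (F \<inter> {x. a \<bullet> x \<le> c})"
  then obtain x y where x: "x \<in> F" "c \<le> a \<bullet> x" and y: "y \<in> F" "a \<bullet> y \<le> c" and s: "s = x + y"
    by (auto simp: set_plus_def)
  obtain w where w: "w \<in> closed_segment y x" "a \<bullet> w = c"
    using connected_ivt_hyperplane[OF connected_segment _ _ y(2) x(2)] by blast
  then obtain t where t: "0 \<le> t" "t \<le> 1" "w = (1 - t) *\<^sub>R y + t *\<^sub>R x"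
    by (auto simp: in_segment)
  \<comment> \<open>The reflection u = x + y - w of w in the midpoint of x and y also lies in F.\<close>
  define u where "u = t *\<^sub>R y + (1 - t) *\<^sub>R x"
  have "u \<in> F" "w \<in> F"
    using assms x(1) y(1) t by (auto simp: u_def convex_def)
  moreover have "s = u + w"
    by (simp add: s t(3) u_def algebra_simps)
  ultimately show "s \<in> F + (F \<inter> {x. a \<bullet> x = c})"
    using w(2) by (auto intro: set_plus_intro)
next
  fix s assume "s \<in> F + (F \<inter> {x. a \<bullet> x = c})"
  then obtain x y where x: "x \<in> F" and y: "y \<in> F" "a \<bullet> y = c" and s: "s = x + y"
    by (auto simp: set_plus_def)
  show "s \<in> (F \<inter> {x. c \<le> a \<bullet> x}) + (F \<inter> {x. a \<bullet> x \<le> c})"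
  proof (cases "c \<le> a \<bullet> x")
    case True
    then show ?thesis using x y s by (auto intro: set_plus_intro)
  next
    case False
    then show ?thesis using x y s set_plus_intro[of y _ x] by (auto simp: add.commute)
  qed
qed

lemma aff_dim_Int_halfspace_le:
  fixes F :: "'a::euclidean_space set"
  assumes "convex F" "z \<in> F" "a \<bullet> z < c"
  shows "aff_dim (F \<inter> {x. a \<bullet> x \<le> c}) = aff_dim F"
proof -
  have "z \<in> interior {x. a \<bullet> x \<le> c}"
    by (rule interiorI[of "{x. a \<bullet> x < c}"]) (use assms open_halfspace_lt in auto)
  then show ?thesis
    using aff_dim_convex_Int_nonempty_interior[OF assms(1)] assms(2) by blast
qed

lemma rel_interior_meets_hyperplane:
  fixes F :: "'a::euclidean_space set"
  assumes "convex F" "y \<in> F" "a \<bullet> y < c" "z \<in> F" "c < a \<bullet> z"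
  obtains p where "p \<in> rel_interior F" "a \<bullet> p = c"
proof -
  obtain r where r: "r \<in> rel_interior F"
    using assms(1,2) rel_interior_eq_empty by blast
  have segment: "open_segment r v \<subseteq> rel_interior F" if "v \<in> F" for v
    using rel_interior_closure_convex_segment[OF assms(1) r] that closure_subset by blast
  consider "a \<bullet> r = c" | "a \<bullet> r < c" | "c < a \<bullet> r" by linarith
  then show ?thesis
  proof cases
    case 1
    then show ?thesis using r that by blast
  next
    case 2
    then show ?thesis
      using open_segment_meets_hyperplane[OF 2 assms(5)] segment[OF assms(4)] that by blast
  next
    case 3
    then show ?thesis
      using open_segment_meets_hyperplane[OF assms(3) 3] segment[OF assms(2)] that
      by (metis open_segment_commute subsetD)
  qed
qed

lemma aff_dim_Int_hyperplane_crossing: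
  fixes F :: "'a::euclidean_space set"
  assumes "convex F" "y \<in> F" "a \<bullet> y < c" "z \<in> F" "c < a \<bullet> z"
  shows "aff_dim (F \<inter> {x. a \<bullet> x = c}) = aff_dim F - 1"
proof -
  obtain p where p: "p \<in> rel_interior F" "a \<bullet> p = c"
    using rel_interior_meets_hyperplane[OF assms] .
  obtain U where U: "open U" "rel_interior F = U \<inter> affine hull F"
    using openin_rel_interior[of F] by (auto simp: openin_open)
  define A where "A = affine hull F \<inter> {x. a \<bullet> x = c}"
  have "p \<in> A \<inter> U"
    using p U rel_interior_subset hull_subset by (fastforce simp: A_def)
  then have "aff_dim (A \<inter> U) = aff_dim A"
    by (intro aff_dim_convex_Int_open U) (auto simp: A_def intro: convex_Int convex_affine_hull convex_hyperplane)
  moreover have "aff_dim A = aff_dim F - 1"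
    using \<open>p \<in> A \<inter> U\<close> assms(2,3) hull_subset[of F affine]
    by (auto simp: A_def aff_dim_affine_Int_hyperplane)
  moreover have "A \<inter> U \<subseteq> F \<inter> {x. a \<bullet> x = c}" "F \<inter> {x. a \<bullet> x = c} \<subseteq> A"
    using U rel_interior_subset hull_subset[of F affine] by (auto simp: A_def)
  ultimately show ?thesis
    using aff_dim_subset by (metis order_antisym)
qed

section \<open>Classes of polytopes\<close>

lemma pclass_plus:
  fixes A B :: "'a::euclidean_space set"
  assumes "polytope A" "A \<noteq> {}" "polytope B" "B \<noteq> {}"
  shows "pclass (A + B) = pclass A + pclass B"
proof -
  have AB: "polytope (A + B)" "A + B \<noteq> {}"
    using polytope_set_plus[OF assms(1,3)] assms(2,4) by (auto simp: set_plus_def)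
  have "abs_grot (Abs_ppoly A, ppzero) + abs_grot (Abs_ppoly B, ppzero)
      = abs_grot (ppadd (Abs_ppoly A) (Abs_ppoly B), ppadd ppzero ppzero)"
    by (simp add: plus_grot.abs_eq grot.abs_eq_iff equivp_reflp[OF grot_rel_equivp])
  also have "\<dots> = abs_grot (Abs_ppoly (A + B), ppzero)"
    unfolding grot.abs_eq_iff grot_rel_def
    using assms AB by (auto simp: pset_ppadd pset_ppzero Abs_ppoly_inverse ac_simps intro!: exI[of _ ppzero])
  finally show ?thesis
    using AB assms by (simp add: pclass_def)
qed

lemma pclass_Int_halfspaces:
  fixes P :: "'a::euclidean_space set"
  assumes "polytope P" "P \<inter> {x. c \<le> a \<bullet> x} \<noteq> {}" "P \<inter> {x. a \<bullet> x \<le> c} \<noteq> {}"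
  shows "pclass P + pclass (P \<inter> {x. a \<bullet> x = c})
       = pclass (P \<inter> {x. c \<le> a \<bullet> x}) + pclass (P \<inter> {x. a \<bullet> x \<le> c})"
proof -
  have "polytope (P \<inter> {x. c \<le> a \<bullet> x})" "polytope (P \<inter> {x. a \<bullet> x \<le> c})"
    "polytope (P \<inter> {x. a \<bullet> x = c})"
    using assms(1) by (auto intro: polytope_Int_polyhedron polyhedron_halfspace_ge
        polyhedron_halfspace_le polyhedron_hyperplane)
  moreover have "P \<noteq> {}" "P \<inter> {x. a \<bullet> x = c} \<noteq> {}"
    using assms convex_meets_hyperplane polytope_imp_convex by auto
  ultimately show ?thesis
    using convex_halfspace_parts_plus[OF polytope_imp_convex[OF assms(1)], of c a] assms
    by (simp add: pclass_plus[symmetric])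
qed

section \<open>Faces of polytopes and of their hyperplane sections\<close>

lemma linear_functional_eq_inner_adjoint:
  fixes phi :: "'a::euclidean_space \<Rightarrow> real"
  assumes "linear phi"
  shows "phi x = adjoint phi 1 \<bullet> x"
  using adjoint_works[OF assms, of x 1] by (simp add: inner_commute)

lemma maximizers_eq_Int_hyperplane:
  fixes Q :: "'a::real_inner set"
  assumes "\<forall>x\<in>Q. b \<bullet> x \<le> d" "m \<in> Q" "b \<bullet> m = d"
  shows "{q \<in> Q. \<forall>q'\<in>Q. b \<bullet> q' \<le> b \<bullet> q} = Q \<inter> {x. b \<bullet> x = d}"
  using assms by (auto intro: order.antisym)

lemma faces_eq_nonempty_face_of:
  fixes Q :: "'a::euclidean_space set"
  assumes "polytope Q" "Q \<noteq> {}"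
  shows "faces Q = {F. F face_of Q \<and> F \<noteq> {}}"
proof (intro set_eqI iffI)
  fix F assume "F \<in> faces Q"
  then obtain psi :: "'a \<Rightarrow> real" where "linear psi" and F: "F = {q \<in> Q. \<forall>q'\<in>Q. psi q' \<le> psi q}"
    unfolding faces_def by blast
  define b where "b = adjoint psi 1"
  have F: "F = {q \<in> Q. \<forall>q'\<in>Q. b \<bullet> q' \<le> b \<bullet> q}"
    using F linear_functional_eq_inner_adjoint[OF \<open>linear psi\<close>] by (simp add: b_def)
  have "continuous_on Q (\<lambda>x. b \<bullet> x)"
    by (intro continuous_intros)
  then obtain m where m: "m \<in> Q" "\<forall>y\<in>Q. b \<bullet> y \<le> b \<bullet> m"
    using continuous_attains_sup[OF polytope_imp_compact[OF assms(1)] assms(2)] by blast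
  then have "F = Q \<inter> {x. b \<bullet> x = b \<bullet> m}"
    unfolding F by (intro maximizers_eq_Int_hyperplane) auto
  then show "F \<in> {F. F face_of Q \<and> F \<noteq> {}}"
    using face_of_Int_supporting_hyperplane_le[OF polytope_imp_convex[OF assms(1)]] m by auto
next
  fix F assume "F \<in> {F. F face_of Q \<and> F \<noteq> {}}"
  then have "F exposed_face_of Q" "F \<noteq> {}"
    using exposed_face_of_polyhedron polytope_imp_polyhedron assms(1) by auto
  then obtain b d f where "Q \<subseteq> {x. b \<bullet> x \<le> d}" "F = Q \<inter> {x. b \<bullet> x = d}" "f \<in> F"
    unfolding exposed_face_of_def by blast
  then have "F = {q \<in> Q. \<forall>q'\<in>Q. b \<bullet> q' \<le> b \<bullet> q}"
    using maximizers_eq_Int_hyperplane[of Q b d f] by auto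
  moreover have "linear (\<lambda>x. b \<bullet> x)"
    by (simp add: bounded_linear.linear bounded_linear_inner_right)
  ultimately show "F \<in> faces Q"
    unfolding faces_def by blast
qed

lemma exists_face_of_rel_interior:
  fixes P :: "'a::euclidean_space set"
  assumes "polyhedron P" "x \<in> P"
  obtains F where "F face_of P" "x \<in> rel_interior F"
proof -
  \<comment> \<open>The smallest face containing x; a proper face of it through x would be smaller still.\<close>
  define F where "F = \<Inter>{T. T face_of P \<and> x \<in> T}"
  have "F face_of P"
    unfolding F_def using face_of_refl[OF polyhedron_imp_convex[OF assms(1)]] assms(2)
    by (intro face_of_Inter) auto
  moreover have "x \<in> rel_interior F"
  proof (rule ccontr)
    assume "x \<notin> rel_interior F"
    have "polyhedron F"
      using face_of_polyhedron_polyhedron[OF assms(1) \<open>F face_of P\<close>] .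
    moreover have "x \<in> F"
      unfolding F_def by blast
    ultimately have "x \<in> rel_frontier F"
      using \<open>x \<notin> rel_interior F\<close> by (simp add: rel_frontier_def polyhedron_imp_closed)
    then obtain T where T: "T face_of F" "T \<noteq> F" "x \<in> T"
      using rel_frontier_of_polyhedron_alt[OF \<open>polyhedron F\<close>] by blast
    have "F \<subseteq> T"
      unfolding F_def using T(3) face_of_trans[OF T(1) \<open>F face_of P\<close>] by (intro Inter_lower) simp
    then show False
      using T face_of_imp_subset by blast
  qed
  ultimately show ?thesis
    using that by blast
qed

lemma face_of_Int_eq_Int_face_of:
  fixes P :: "'a::euclidean_space set"
  assumes "polyhedron P" "G face_of (P \<inter> T)" "E face_of T"
    and "x \<in> rel_interior G" "x \<in> rel_interior E"
  obtains F where "F face_of P" "G = F \<inter> E"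
proof -
  have G: "G \<subseteq> P \<inter> T" "x \<in> G"
    using assms(2,4) face_of_imp_subset rel_interior_subset by blast+
  then obtain F where F: "F face_of P" "x \<in> rel_interior F"
    using exists_face_of_rel_interior assms(1) by blast
  have "x \<in> F" "x \<in> E"
    using F(2) assms(5) rel_interior_subset by blast+
  have "G \<subseteq> F"
    by (rule subset_of_face_of[OF F(1)]) (use G assms(4) \<open>x \<in> F\<close> in blast)+
  moreover have "G \<subseteq> E"
    by (rule subset_of_face_of[OF assms(3)]) (use G assms(4) \<open>x \<in> E\<close> in blast)+
  moreover have "F \<inter> E \<subseteq> G"
  proof (rule subset_of_face_of[OF assms(2)])
    show "F \<inter> E \<subseteq> P \<inter> T"
      using F(1) assms(3) face_of_imp_subset by blast
    have "rel_interior (F \<inter> E) = rel_interior F \<inter> rel_interior E"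
      using F assms(3,5) by (intro convex_rel_interior_inter_two face_of_imp_convex) blast+
    then show "G \<inter> rel_interior (F \<inter> E) \<noteq> {}"
      using G(2) F(2) assms(5) by blast
  qed
  ultimately show ?thesis
    using that F(1) by blast
qed

definition crossing_faces :: "'a::euclidean_space set \<Rightarrow> 'a \<Rightarrow> real \<Rightarrow> 'a set set" where
  "crossing_faces P a c = {F. F face_of P \<and> (\<exists>y\<in>F. a \<bullet> y < c) \<and> (\<exists>z\<in>F. c < a \<bullet> z)}"

lemma crossing_faces_uminus [simp]: "crossing_faces P (- a) (- c) = crossing_faces P a c"
  by (auto simp: crossing_faces_def)

lemma crossing_face_meets_hyperplane:
  assumes "F \<in> crossing_faces P a c"
  shows "F \<inter> {x. a \<bullet> x = c} \<noteq> {}"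
  using assms convex_meets_hyperplane[of F c a] face_of_imp_convex
  unfolding crossing_faces_def by (fastforce dest: less_imp_le)

lemma crossing_face_subset_face_of:
  assumes "F \<in> crossing_faces P a c" "F' face_of P" "F \<inter> {x. a \<bullet> x = c} \<subseteq> F'"
  shows "F \<subseteq> F'"
proof
  fix u assume "u \<in> F"
  obtain y z where yz: "y \<in> F" "a \<bullet> y < c" "z \<in> F" "c < a \<bullet> z" and "F face_of P"
    using assms(1) by (auto simp: crossing_faces_def)
  have on_segment: "u \<in> F'" if "w \<in> open_segment u v" "v \<in> F" "a \<bullet> w = c" for v w
  proof -
    have "w \<in> F"
      using \<open>F face_of P\<close> \<open>u \<in> F\<close> that(1,2) face_of_imp_convex convex_contains_open_segment by blast
    then show ?thesis
      using face_ofD[OF assms(2) that(1)] assms(3) face_of_imp_subset[OF \<open>F face_of P\<close>]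
        \<open>u \<in> F\<close> that(2,3) by blast
  qed
  consider "a \<bullet> u = c" | "a \<bullet> u < c" | "c < a \<bullet> u" by linarith
  then show "u \<in> F'"
  proof cases
    case 1
    then show ?thesis using assms(3) \<open>u \<in> F\<close> by blast
  next
    case 2
    then show ?thesis
      using open_segment_meets_hyperplane[OF 2 yz(4)] on_segment yz(3) by metis
  next
    case 3
    then show ?thesis
      using open_segment_meets_hyperplane[OF yz(2) 3] on_segment yz(1) by (metis open_segment_commute)
  qed
qed

lemma crossing_face_Int_not_face_of:
  assumes "F \<in> crossing_faces P a c" "{x. a \<bullet> x = c} \<subseteq> L" "\<not> F \<subseteq> L"
  shows "\<not> (F \<inter> L) face_of P"
  using crossing_face_subset_face_of[OF assms(1), of "F \<inter> L"] assms(2,3) by blast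

lemma inj_on_Int_crossing_faces:
  assumes "{x. a \<bullet> x = c} \<subseteq> L"
  shows "inj_on (\<lambda>F. F \<inter> L) (crossing_faces P a c)"
proof (rule inj_onI)
  fix F F' assume F: "F \<in> crossing_faces P a c" "F' \<in> crossing_faces P a c" "F \<inter> L = F' \<inter> L"
  then have "F \<inter> {x. a \<bullet> x = c} = F' \<inter> {x. a \<bullet> x = c}"
    using assms by blast
  moreover have "F face_of P" "F' face_of P"
    using F(1,2) by (auto simp: crossing_faces_def)
  ultimately show "F = F'"
    using crossing_face_subset_face_of[OF F(1), of F'] crossing_face_subset_face_of[OF F(2), of F]
    by blast
qed

lemma face_of_Int_hyperplane_not_crossing:
  assumes "F face_of P" "F \<notin> crossing_faces P a c"
  shows "(F \<inter> {x. a \<bullet> x = c}) face_of P"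
proof -
  have "F \<subseteq> {x. a \<bullet> x \<le> c} \<or> F \<subseteq> {x. c \<le> a \<bullet> x}"
    using assms by (auto simp: crossing_faces_def not_less)
  then have "(F \<inter> {x. a \<bullet> x = c}) face_of F"
    using face_of_Int_supporting_hyperplane_le face_of_Int_supporting_hyperplane_ge
      face_of_imp_convex[OF assms(1)] by blast
  then show ?thesis
    using face_of_trans assms(1) by blast
qed

lemma hyperplane_face_of_halfspace_le:
  fixes a :: "'a::euclidean_space"
  shows "{x. a \<bullet> x = c} face_of {x. a \<bullet> x \<le> c}"
proof -
  have "{x. a \<bullet> x \<le> c} \<inter> {x. a \<bullet> x = c} face_of {x. a \<bullet> x \<le> c}"
    by (rule face_of_Int_supporting_hyperplane_le[OF convex_halfspace_le]) simp
  moreover have "{x. a \<bullet> x \<le> c} \<inter> {x. a \<bullet> x = c} = {x. a \<bullet> x = c}"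
    by auto
  ultimately show ?thesis
    by simp
qed

lemma nonempty_face_of_Int_halfspace_le_cases:
  fixes P :: "'a::euclidean_space set"
  assumes "polyhedron P" "G face_of (P \<inter> {x. a \<bullet> x \<le> c})" "G \<noteq> {}"
  obtains "G face_of P" "G \<subseteq> {x. a \<bullet> x \<le> c}"
    | F where "F \<in> crossing_faces P a c" "G = F \<inter> {x. a \<bullet> x \<le> c}"
    | F where "F \<in> crossing_faces P a c" "G = F \<inter> {x. a \<bullet> x = c}"
proof -
  let ?K = "{x. a \<bullet> x \<le> c}" and ?H = "{x. a \<bullet> x = c}"
  obtain x where x: "x \<in> rel_interior G"
    using assms(2,3) face_of_imp_convex rel_interior_eq_empty by blast
  have "x \<in> G"
    using x rel_interior_subset by blast
  then have "a \<bullet> x \<le> c"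
    using assms(2) face_of_imp_subset by blast
  then consider "a \<bullet> x < c" | "a \<bullet> x = c"
    by linarith
  then show ?thesis
  proof cases
    case 1
    have "x \<in> interior ?K"
      by (rule interiorI[of "{x. a \<bullet> x < c}"]) (use 1 open_halfspace_lt in auto)
    then have "x \<in> rel_interior ?K"
      using interior_subset_rel_interior by blast
    then obtain F where F: "F face_of P" "G = F \<inter> ?K"
      using face_of_Int_eq_Int_face_of[OF assms(1,2) face_of_refl[OF convex_halfspace_le] x] by blast
    show ?thesis
    proof (cases "F \<subseteq> ?K")
      case True
      then show ?thesis
        using F that(1) by (simp add: Int_absorb2)
    next
      case False
      then have "F \<in> crossing_faces P a c"
        using F 1 \<open>x \<in> G\<close> unfolding crossing_faces_def by (auto simp: not_le)
      then show ?thesis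
        using F(2) that(2) by blast
    qed
  next
    case 2
    then have "x \<in> rel_interior ?H"
      by (simp add: rel_interior_affine[OF affine_hyperplane])
    then obtain F where F: "F face_of P" "G = F \<inter> ?H"
      using face_of_Int_eq_Int_face_of[OF assms(1,2) hyperplane_face_of_halfspace_le x] by blast
    show ?thesis
    proof (cases "F \<in> crossing_faces P a c")
      case True
      then show ?thesis
        using F(2) that(3) by blast
    next
      case False
      then show ?thesis
        using F face_of_Int_hyperplane_not_crossing that(1) by blast
    qed
  qed
qed

lemma nonempty_faces_of_Int_halfspace_le:
  fixes P :: "'a::euclidean_space set"
  assumes "polyhedron P"
  shows "{G. G face_of (P \<inter> {x. a \<bullet> x \<le> c}) \<and> G \<noteq> {}}
       = {F. F face_of P \<and> F \<noteq> {} \<and> F \<subseteq> {x. a \<bullet> x \<le> c}}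
         \<union> (\<lambda>F. F \<inter> {x. a \<bullet> x \<le> c}) ` crossing_faces P a c
         \<union> (\<lambda>F. F \<inter> {x. a \<bullet> x = c}) ` crossing_faces P a c"
  (is "?L = ?A \<union> ?B \<union> ?C")
proof (intro equalityI subsetI)
  fix G assume "G \<in> ?L"
  then have G: "G face_of (P \<inter> {x. a \<bullet> x \<le> c})" "G \<noteq> {}"
    by auto
  show "G \<in> ?A \<union> ?B \<union> ?C"
    by (rule nonempty_face_of_Int_halfspace_le_cases[OF assms G]) (use G(2) in auto)
next
  let ?K = "{x. a \<bullet> x \<le> c}" and ?H = "{x. a \<bullet> x = c}"
  fix G assume "G \<in> ?A \<union> ?B \<union> ?C"
  then consider "G \<in> ?A" | "G \<in> ?B" | "G \<in> ?C"
    by blast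
  then show "G \<in> ?L"
  proof cases
    case 1
    then have "G face_of P" "G \<subseteq> P \<inter> ?K" "G \<noteq> {}"
      using face_of_imp_subset by blast+
    then show ?thesis
      using face_of_subset[of G P "P \<inter> ?K"] by blast
  next
    case 2
    then obtain F where F: "F \<in> crossing_faces P a c" "G = F \<inter> ?K"
      by blast
    then have "G face_of (P \<inter> ?K)"
      using face_of_Int_Int[OF _ face_of_refl[OF convex_halfspace_le]] by (auto simp: crossing_faces_def)
    moreover have "G \<noteq> {}"
      using F unfolding crossing_faces_def by (auto dest: less_imp_le)
    ultimately show ?thesis
      by blast
  next
    case 3
    then obtain F where F: "F \<in> crossing_faces P a c" "G = F \<inter> ?H"
      by blast
    moreover have "F face_of P"
      using F(1) by (simp add: crossing_faces_def)
    ultimately show ?thesis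
      using crossing_face_meets_hyperplane face_of_Int_Int[OF _ hyperplane_face_of_halfspace_le] by blast
  qed
qed

lemma nonempty_faces_of_Int_hyperplane:
  fixes P :: "'a::euclidean_space set"
  assumes "polyhedron P"
  shows "{G. G face_of (P \<inter> {x. a \<bullet> x = c}) \<and> G \<noteq> {}}
       = {F. F face_of P \<and> F \<noteq> {} \<and> F \<subseteq> {x. a \<bullet> x = c}}
         \<union> (\<lambda>F. F \<inter> {x. a \<bullet> x = c}) ` crossing_faces P a c"
  (is "?L = ?A \<union> ?C")
proof (intro equalityI subsetI)
  let ?H = "{x. a \<bullet> x = c}"
  fix G assume "G \<in> ?L"
  then have G: "G face_of (P \<inter> ?H)" "G \<noteq> {}"
    by auto
  then obtain x where x: "x \<in> rel_interior G"
    using face_of_imp_convex rel_interior_eq_empty by blast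
  then have "x \<in> rel_interior ?H"
    using G(1) face_of_imp_subset rel_interior_subset rel_interior_affine[OF affine_hyperplane] by blast
  then obtain F where F: "F face_of P" "G = F \<inter> ?H"
    using face_of_Int_eq_Int_face_of[OF assms G(1) face_of_refl[OF convex_hyperplane] x] by blast
  show "G \<in> ?A \<union> ?C"
  proof (cases "F \<in> crossing_faces P a c")
    case True
    then show ?thesis using F(2) by blast
  next
    case False
    then have "G face_of P"
      using F face_of_Int_hyperplane_not_crossing by blast
    then show ?thesis using F(2) G(2) by blast
  qed
next
  let ?H = "{x. a \<bullet> x = c}"
  fix G assume "G \<in> ?A \<union> ?C"
  then consider "G \<in> ?A" | "G \<in> ?C"
    by blast
  then show "G \<in> ?L"
  proof cases
    case 1
    then have "G face_of P" "G \<subseteq> P \<inter> ?H" "G \<noteq> {}"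
      using face_of_imp_subset by blast+
    then show ?thesis
      using face_of_subset[of G P "P \<inter> ?H"] by blast
  next
    case 2
    then obtain F where F: "F \<in> crossing_faces P a c" "G = F \<inter> ?H"
      by blast
    moreover have "F face_of P"
      using F(1) by (simp add: crossing_faces_def)
    ultimately show ?thesis
      using crossing_face_meets_hyperplane face_of_Int_Int[OF _ face_of_refl[OF convex_hyperplane]]
      by blast
  qed
qed

section \<open>The face Euler characteristic across a hyperplane cut\<close>

definition signed_pclass :: "'a::euclidean_space set \<Rightarrow> 'a grot" where
  "signed_pclass F = (if even (aff_dim F) then pclass F else - pclass F)"

lemma chiF_eq_sum_signed_pclass:
  assumes "polytope Q" "Q \<noteq> {}"
  shows "chiF Q = (\<Sum>F | F face_of Q \<and> F \<noteq> {}. signed_pclass F)"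
  using assms by (simp add: chiF_def faces_eq_nonempty_face_of signed_pclass_def)

lemma signed_pclass_crossing:
  fixes F :: "'a::euclidean_space set"
  assumes "polytope F" "y \<in> F" "a \<bullet> y < c" "z \<in> F" "c < a \<bullet> z"
  shows "signed_pclass F = signed_pclass (F \<inter> {x. c \<le> a \<bullet> x}) + signed_pclass (F \<inter> {x. a \<bullet> x \<le> c})
           + signed_pclass (F \<inter> {x. a \<bullet> x = c})"
proof -
  have "convex F"
    using assms(1) polytope_imp_convex by blast
  have dim_ge: "aff_dim (F \<inter> {x. c \<le> a \<bullet> x}) = aff_dim F"
    using aff_dim_Int_halfspace_le[OF \<open>convex F\<close> assms(4), of "-a" "-c"] assms(5) by simp
  have dim_le: "aff_dim (F \<inter> {x. a \<bullet> x \<le> c}) = aff_dim F"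
    using aff_dim_Int_halfspace_le[OF \<open>convex F\<close> assms(2,3)] .
  have dim_eq: "aff_dim (F \<inter> {x. a \<bullet> x = c}) = aff_dim F - 1"
    using aff_dim_Int_hyperplane_crossing[OF \<open>convex F\<close> assms(2-5)] .
  have split: "pclass F = pclass (F \<inter> {x. c \<le> a \<bullet> x}) + pclass (F \<inter> {x. a \<bullet> x \<le> c})
      - pclass (F \<inter> {x. a \<bullet> x = c})"
    unfolding eq_diff_eq
  proof (rule pclass_Int_halfspaces[OF assms(1)])
    show "F \<inter> {x. c \<le> a \<bullet> x} \<noteq> {}" "F \<inter> {x. a \<bullet> x \<le> c} \<noteq> {}"
      using assms(2-5) by (auto intro!: less_imp_le)
  qed
  show ?thesis
    unfolding signed_pclass_def dim_ge dim_le dim_eq split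
    by (cases "even (aff_dim F)") (simp_all add: algebra_simps)
qed

lemma finite_crossing_faces:
  fixes P :: "'a::euclidean_space set"
  assumes "polytope P"
  shows "finite (crossing_faces P a c)"
  using finite_polytope_faces[OF assms] by (rule finite_subset[rotated]) (auto simp: crossing_faces_def)

lemma chiF_Int_halfspace_le:
  fixes P :: "'a::euclidean_space set"
  assumes "polytope P" "P \<inter> {x. a \<bullet> x \<le> c} \<noteq> {}"
  shows "chiF (P \<inter> {x. a \<bullet> x \<le> c})
       = (\<Sum>F | F face_of P \<and> F \<noteq> {} \<and> F \<subseteq> {x. a \<bullet> x \<le> c}. signed_pclass F)
         + (\<Sum>F\<in>crossing_faces P a c. signed_pclass (F \<inter> {x. a \<bullet> x \<le> c}))
         + (\<Sum>F\<in>crossing_faces P a c. signed_pclass (F \<inter> {x. a \<bullet> x = c}))"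
  (is "_ = ?rhs")
proof -
  let ?K = "{x. a \<bullet> x \<le> c}" and ?H = "{x. a \<bullet> x = c}" and ?X = "crossing_faces P a c"
  let ?A = "{F. F face_of P \<and> F \<noteq> {} \<and> F \<subseteq> ?K}"
  have "finite ?A"
    using finite_polytope_faces[OF assms(1)] by (rule finite_subset[rotated]) auto
  have not_face: "\<not> (F \<inter> ?K) face_of P" "\<not> (F \<inter> ?H) face_of P" if "F \<in> ?X" for F
    using crossing_face_Int_not_face_of[OF that, of ?K] crossing_face_Int_not_face_of[OF that, of ?H] that
    unfolding crossing_faces_def by force+
  have "F \<inter> ?K \<noteq> F' \<inter> ?H" if "F \<in> ?X" for F F'
    using that unfolding crossing_faces_def by force
  then have disjoint: "?A \<inter> (\<lambda>F. F \<inter> ?K) ` ?X = {}"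
    "(?A \<union> (\<lambda>F. F \<inter> ?K) ` ?X) \<inter> (\<lambda>F. F \<inter> ?H) ` ?X = {}"
    using not_face by blast+
  have injective: "inj_on (\<lambda>F. F \<inter> ?K) ?X" "inj_on (\<lambda>F. F \<inter> ?H) ?X"
    by (rule inj_on_Int_crossing_faces; auto)+
  have "polytope (P \<inter> ?K)"
    using assms(1) by (intro polytope_Int_polyhedron polyhedron_halfspace_le)
  then have "chiF (P \<inter> ?K)
      = sum signed_pclass (?A \<union> (\<lambda>F. F \<inter> ?K) ` ?X \<union> (\<lambda>F. F \<inter> ?H) ` ?X)"
    using chiF_eq_sum_signed_pclass[OF _ assms(2)]
      nonempty_faces_of_Int_halfspace_le[OF polytope_imp_polyhedron[OF assms(1)]] by simp
  also have "\<dots> = sum signed_pclass ?A + sum signed_pclass ((\<lambda>F. F \<inter> ?K) ` ?X)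
      + sum signed_pclass ((\<lambda>F. F \<inter> ?H) ` ?X)"
    using disjoint \<open>finite ?A\<close> finite_crossing_faces[OF assms(1)]
    by (simp add: sum.union_disjoint)
  also have "\<dots> = ?rhs"
    by (simp add: sum.reindex injective)
  finally show ?thesis .
qed

lemma chiF_Int_halfspace_ge:
  fixes P :: "'a::euclidean_space set"
  assumes "polytope P" "P \<inter> {x. c \<le> a \<bullet> x} \<noteq> {}"
  shows "chiF (P \<inter> {x. c \<le> a \<bullet> x})
       = (\<Sum>F | F face_of P \<and> F \<noteq> {} \<and> F \<subseteq> {x. c \<le> a \<bullet> x}. signed_pclass F)
         + (\<Sum>F\<in>crossing_faces P a c. signed_pclass (F \<inter> {x. c \<le> a \<bullet> x}))
         + (\<Sum>F\<in>crossing_faces P a c. signed_pclass (F \<inter> {x. a \<bullet> x = c}))"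
proof -
  have reflect: "{x. (- a) \<bullet> x \<le> - c} = {x. c \<le> a \<bullet> x}"
    "{x. (- a) \<bullet> x = - c} = {x. a \<bullet> x = c}"
    by auto
  show ?thesis
    using chiF_Int_halfspace_le[OF assms(1), of "- a" "- c"] assms(2)
    unfolding reflect crossing_faces_uminus by blast
qed

lemma chiF_Int_hyperplane:
  fixes P :: "'a::euclidean_space set"
  assumes "polytope P" "P \<inter> {x. a \<bullet> x = c} \<noteq> {}"
  shows "chiF (P \<inter> {x. a \<bullet> x = c})
       = (\<Sum>F | F face_of P \<and> F \<noteq> {} \<and> F \<subseteq> {x. a \<bullet> x = c}. signed_pclass F)
         + (\<Sum>F\<in>crossing_faces P a c. signed_pclass (F \<inter> {x. a \<bullet> x = c}))"
  (is "_ = ?rhs")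
proof -
  let ?H = "{x. a \<bullet> x = c}" and ?X = "crossing_faces P a c"
  let ?A = "{F. F face_of P \<and> F \<noteq> {} \<and> F \<subseteq> ?H}"
  have "finite ?A"
    using finite_polytope_faces[OF assms(1)] by (rule finite_subset[rotated]) auto
  have "\<not> (F \<inter> ?H) face_of P" if "F \<in> ?X" for F
    using crossing_face_Int_not_face_of[OF that, of ?H] that
    unfolding crossing_faces_def by force
  then have disjoint: "?A \<inter> (\<lambda>F. F \<inter> ?H) ` ?X = {}"
    by blast
  have "polytope (P \<inter> ?H)"
    using assms(1) by (intro polytope_Int_polyhedron polyhedron_hyperplane)
  then have "chiF (P \<inter> ?H) = sum signed_pclass (?A \<union> (\<lambda>F. F \<inter> ?H) ` ?X)"
    using chiF_eq_sum_signed_pclass[OF _ assms(2)]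
      nonempty_faces_of_Int_hyperplane[OF polytope_imp_polyhedron[OF assms(1)]] by simp
  also have "\<dots> = sum signed_pclass ?A + sum signed_pclass ((\<lambda>F. F \<inter> ?H) ` ?X)"
    using disjoint \<open>finite ?A\<close> finite_crossing_faces[OF assms(1)]
    by (simp add: sum.union_disjoint)
  also have "\<dots> = ?rhs"
    using inj_on_Int_crossing_faces[of a c ?H P] by (simp add: sum.reindex)
  finally show ?thesis .
qed

lemma chiF_eq_sum_sides_crossing:
  fixes P :: "'a::euclidean_space set"
  assumes "polytope P" "P \<noteq> {}"
  shows "chiF P + (\<Sum>F | F face_of P \<and> F \<noteq> {} \<and> F \<subseteq> {x. a \<bullet> x = c}. signed_pclass F)
       = (\<Sum>F | F face_of P \<and> F \<noteq> {} \<and> F \<subseteq> {x. c \<le> a \<bullet> x}. signed_pclass F)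
         + (\<Sum>F | F face_of P \<and> F \<noteq> {} \<and> F \<subseteq> {x. a \<bullet> x \<le> c}. signed_pclass F)
         + (\<Sum>F\<in>crossing_faces P a c. signed_pclass F)"
proof -
  let ?X = "crossing_faces P a c"
  let ?Ge = "{F. F face_of P \<and> F \<noteq> {} \<and> F \<subseteq> {x. c \<le> a \<bullet> x}}"
  let ?Le = "{F. F face_of P \<and> F \<noteq> {} \<and> F \<subseteq> {x. a \<bullet> x \<le> c}}"
  let ?Eq = "{F. F face_of P \<and> F \<noteq> {} \<and> F \<subseteq> {x. a \<bullet> x = c}}"
  have finite: "finite ?Ge" "finite ?Le"
    using finite_polytope_faces[OF assms(1)] by (auto intro: finite_subset[rotated])
  have "?Ge \<inter> ?Le = ?Eq"
    by (auto simp: subset_iff intro: order.antisym)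
  then have sides: "sum signed_pclass (?Ge \<union> ?Le) + sum signed_pclass ?Eq
      = sum signed_pclass ?Ge + sum signed_pclass ?Le"
    using sum.union_inter[OF finite] by simp
  have "{F. F face_of P \<and> F \<noteq> {}} = (?Ge \<union> ?Le) \<union> ?X"
    unfolding crossing_faces_def by (auto simp: not_le)
  moreover have "(?Ge \<union> ?Le) \<inter> ?X = {}"
    unfolding crossing_faces_def by (auto simp: subset_iff not_le)
  ultimately have "chiF P = sum signed_pclass (?Ge \<union> ?Le) + sum signed_pclass ?X"
    using chiF_eq_sum_signed_pclass[OF assms] finite finite_crossing_faces[OF assms(1)]
    by (simp add: sum.union_disjoint)
  then show ?thesis
    using sides by (simp add: algebra_simps)
qed

lemma chiF_Int_halfspaces:
  fixes P :: "'a::euclidean_space set"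
  assumes "polytope P" "P \<inter> {x. c \<le> a \<bullet> x} \<noteq> {}" "P \<inter> {x. a \<bullet> x \<le> c} \<noteq> {}"
  shows "chiF P + chiF (P \<inter> {x. a \<bullet> x = c})
       = chiF (P \<inter> {x. c \<le> a \<bullet> x}) + chiF (P \<inter> {x. a \<bullet> x \<le> c})"
proof -
  let ?X = "crossing_faces P a c"
  have "P \<noteq> {}" "P \<inter> {x. a \<bullet> x = c} \<noteq> {}"
    using assms convex_meets_hyperplane polytope_imp_convex by auto
  have "signed_pclass F = signed_pclass (F \<inter> {x. c \<le> a \<bullet> x}) + signed_pclass (F \<inter> {x. a \<bullet> x \<le> c})
      + signed_pclass (F \<inter> {x. a \<bullet> x = c})" if F: "F \<in> ?X" for F
  proof -
    obtain y z where "F face_of P" "y \<in> F" "a \<bullet> y < c" "z \<in> F" "c < a \<bullet> z"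
      using F unfolding crossing_faces_def by blast
    then show ?thesis
      using signed_pclass_crossing face_of_polytope_polytope[OF assms(1)] by blast
  qed
  then have "(\<Sum>F\<in>?X. signed_pclass F)
      = (\<Sum>F\<in>?X. signed_pclass (F \<inter> {x. c \<le> a \<bullet> x}))
        + (\<Sum>F\<in>?X. signed_pclass (F \<inter> {x. a \<bullet> x \<le> c}))
        + (\<Sum>F\<in>?X. signed_pclass (F \<inter> {x. a \<bullet> x = c}))"
    by (simp add: sum.distrib[symmetric])
  then show ?thesis
    using chiF_eq_sum_sides_crossing[OF assms(1) \<open>P \<noteq> {}\<close>, of a c]
      chiF_Int_halfspace_ge[OF assms(1,2)] chiF_Int_halfspace_le[OF assms(1,3)]
      chiF_Int_hyperplane[OF assms(1) \<open>P \<inter> {x. a \<bullet> x = c} \<noteq> {}\<close>]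
    by (simp add: algebra_simps)
qed

lemma uminus_image_Int_Collect:
  fixes P :: "'a::ab_group_add set"
  shows "uminus ` (P \<inter> {x. Q x}) = uminus ` P \<inter> {x. Q (- x)}"
  by (auto simp: image_iff)

lemma pclass_uminus_Int_halfspaces:
  fixes P :: "'a::euclidean_space set"
  assumes "polytope P" "P \<inter> {x. c \<le> a \<bullet> x} \<noteq> {}" "P \<inter> {x. a \<bullet> x \<le> c} \<noteq> {}"
  shows "pclass (uminus ` P) + pclass (uminus ` (P \<inter> {x. a \<bullet> x = c}))
       = pclass (uminus ` (P \<inter> {x. c \<le> a \<bullet> x})) + pclass (uminus ` (P \<inter> {x. a \<bullet> x \<le> c}))"
proof -
  have reflect: "uminus ` (P \<inter> {x. c \<le> a \<bullet> x}) = uminus ` P \<inter> {x. a \<bullet> x \<le> - c}"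
    "uminus ` (P \<inter> {x. a \<bullet> x \<le> c}) = uminus ` P \<inter> {x. - c \<le> a \<bullet> x}"
    "uminus ` (P \<inter> {x. a \<bullet> x = c}) = uminus ` P \<inter> {x. a \<bullet> x = - c}"
    unfolding uminus_image_Int_Collect by auto
  have "polytope (uminus ` P)"
    using polytope_linear_image[OF linear_uminus assms(1)] .
  moreover have "uminus ` P \<inter> {x. - c \<le> a \<bullet> x} \<noteq> {}" "uminus ` P \<inter> {x. a \<bullet> x \<le> - c} \<noteq> {}"
    using assms(2,3) unfolding reflect[symmetric] by blast+
  ultimately show ?thesis
    unfolding reflect using pclass_Int_halfspaces[of "uminus ` P" "- c" a] by (simp add: add.commute)
qed

lemma star_identity_iff: "star_identity Q \<longleftrightarrow> pclass (uminus ` Q) + chiF Q = 0"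
  by (simp add: star_identity_def eq_neg_iff_add_eq_0)

theorem lemma5p5:
  fixes P :: "(real ^ 'n) set" and phi :: "real ^ 'n \<Rightarrow> real" and c :: real
  assumes "polytope P"
    and "linear phi" and "phi \<noteq> (\<lambda>x. 0)"
    and "{p \<in> P. phi p \<ge> c} \<noteq> {}" and "{p \<in> P. phi p \<le> c} \<noteq> {}"
  shows "chiF P + chiF (P \<inter> {x. phi x = c})
           = chiF {p \<in> P. phi p \<ge> c} + chiF {p \<in> P. phi p \<le> c}
         \<and> (star_identity {p \<in> P. phi p \<ge> c} \<and> star_identity {p \<in> P. phi p \<le> c}
              \<and> star_identity (P \<inter> {x. phi x = c}) \<longrightarrow> star_identity P)
         \<and> (star_identity P \<and> star_identity {p \<in> P. phi p \<le> c}
              \<and> star_identity (P \<inter> {x. phi x = c}) \<longrightarrow> star_identity {p \<in> P. phi p \<ge> c})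
         \<and> (star_identity P \<and> star_identity {p \<in> P. phi p \<ge> c}
              \<and> star_identity (P \<inter> {x. phi x = c}) \<longrightarrow> star_identity {p \<in> P. phi p \<le> c})
         \<and> (star_identity P \<and> star_identity {p \<in> P. phi p \<ge> c}
              \<and> star_identity {p \<in> P. phi p \<le> c} \<longrightarrow> star_identity (P \<inter> {x. phi x = c}))"
proof -
  define a where "a = adjoint phi 1"
  have phi: "phi x = a \<bullet> x" for x
    unfolding a_def by (rule linear_functional_eq_inner_adjoint[OF assms(2)])
  have halves: "{p \<in> P. phi p \<ge> c} = P \<inter> {x. c \<le> a \<bullet> x}"
    "{p \<in> P. phi p \<le> c} = P \<inter> {x. a \<bullet> x \<le> c}"
    "P \<inter> {x. phi x = c} = P \<inter> {x. a \<bullet> x = c}"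
    by (auto simp: phi)
  have nonempty: "P \<inter> {x. c \<le> a \<bullet> x} \<noteq> {}" "P \<inter> {x. a \<bullet> x \<le> c} \<noteq> {}"
    using assms(4,5) unfolding halves .
  note chi = chiF_Int_halfspaces[OF assms(1) nonempty]
  have "(pclass (uminus ` P) + chiF P)
        + (pclass (uminus ` (P \<inter> {x. a \<bullet> x = c})) + chiF (P \<inter> {x. a \<bullet> x = c}))
      = (pclass (uminus ` (P \<inter> {x. c \<le> a \<bullet> x})) + chiF (P \<inter> {x. c \<le> a \<bullet> x}))
        + (pclass (uminus ` (P \<inter> {x. a \<bullet> x \<le> c})) + chiF (P \<inter> {x. a \<bullet> x \<le> c}))"
    using arg_cong2[OF pclass_uminus_Int_halfspaces[OF assms(1) nonempty] chi, of "(+)"]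
    by (simp add: ac_simps)
  then show ?thesis
    unfolding halves star_identity_iff using chi by auto
qed

end
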